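(* Let $U$ be a finite ground set, $\mathcal{M}=\langle U,\mathcal{F}\rangle$ a matroid on $U$ of rank at least $2$, $\lambda\ge 0$, $d$ an $\alpha$-relaxed semi-metric distance on $U$ (for some $\alpha\ge 1$), and $f:2^U\to\mathbb{R}_{\ge 0}$ a non-negative monotone submodular set function. Let $\phi(S)=f(S)+\lambda\, d(S)$. Let $\{x,y\}$ be a pair of distinct elements with $\{x,y\}\in\mathcal{F}$ maximizing $f(\{x,y\})+\lambda d(x,y)$ among all such pairs. Consider the local search algorithm that starts from a basis $S$ of $\mathcal{M}$ containing both $x$ and $y$ and, while there exist $u\in U\setminus S$ and $v\in S$ with $S-v+u\in\mathcal{F}$ and $\phi(S-v+u)>\phi(S)$, replaces $S$ by $S-v+u$; it returns the final $S$. Then the returned set $S$ satisfies $$\phi(S)\;\ge\;\frac{1}{2\alpha^2}\,\phi(O),$$ where $O$ is an optimal solution, i.e. $\phi(O)=\max\{\phi(T): T\in\mathcal{F}\}$.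
   Context: An $\alpha$-relaxed semi-metric distance on $U$ (with $\alpha\ge 1$) is a function $d:U\times U\to\mathbb{R}_{\ge 0}$ with $d(u,v)=d(v,u)$, $d(u,u)=0$, satisfying $d(u,v)\le \alpha\,(d(v,w)+d(w,u))$ for all $u,v,w\in U$. For $S\subseteq U$, $d(S)=\sum_{\{u,v\}\subseteq S,\,u\ne v} d(u,v)$. $f$ is monotone if $f(S)\le f(T)$ for $S\subseteq T$, and submodular if $f(S\cup\{u\})-f(S)\ge f(T\cup\{u\})-f(T)$ for $S\subseteq T$, $u\notin T$. $\mathcal{F}$ is the family of independent sets of the matroid; a basis is a maximal independent set. $S-v+u$ denotes $(S\setminus\{v\})\cup\{u\}$. *)

theory Defs
  imports Complex_Main
begin

definition matroid :: "'a set \<Rightarrow> 'a set set \<Rightarrow> bool" where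
  "matroid U F \<longleftrightarrow> finite U \<and> F \<subseteq> Pow U \<and> {} \<in> F
     \<and> (\<forall>A B. B \<in> F \<and> A \<subseteq> B \<longrightarrow> A \<in> F)
     \<and> (\<forall>A B. A \<in> F \<and> B \<in> F \<and> card A < card B \<longrightarrow> (\<exists>e \<in> B - A. insert e A \<in> F))"

definition basis :: "'a set \<Rightarrow> 'a set set \<Rightarrow> 'a set \<Rightarrow> bool" where
  "basis U F B \<longleftrightarrow> B \<in> F \<and> (\<forall>e \<in> U - B. insert e B \<notin> F)"

definition matroid_rank_ge2 :: "'a set set \<Rightarrow> bool" where
  "matroid_rank_ge2 F \<longleftrightarrow> (\<exists>A \<in> F. card A \<ge> 2)"

definition relaxed_semimetric :: "real \<Rightarrow> 'a set \<Rightarrow> ('a \<Rightarrow> 'a \<Rightarrow> real) \<Rightarrow> bool" where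
  "relaxed_semimetric \<alpha> U d \<longleftrightarrow> \<alpha> \<ge> 1
     \<and> (\<forall>u \<in> U. \<forall>v \<in> U. d u v \<ge> 0 \<and> d u v = d v u)
     \<and> (\<forall>u \<in> U. d u u = 0)
     \<and> (\<forall>u \<in> U. \<forall>v \<in> U. \<forall>w \<in> U. d u v \<le> \<alpha> * (d v w + d w u))"

definition monotone_set_fun :: "'a set \<Rightarrow> ('a set \<Rightarrow> real) \<Rightarrow> bool" where
  "monotone_set_fun U f \<longleftrightarrow> (\<forall>S T. S \<subseteq> T \<and> T \<subseteq> U \<longrightarrow> f S \<le> f T)"

definition submodular :: "'a set \<Rightarrow> ('a set \<Rightarrow> real) \<Rightarrow> bool" where
  "submodular U f \<longleftrightarrow> (\<forall>S T u. S \<subseteq> T \<and> T \<subseteq> U \<and> u \<in> U \<and> u \<notin> T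
      \<longrightarrow> f (insert u S) - f S \<ge> f (insert u T) - f T)"

text \<open>Sum of distances over unordered pairs of distinct elements of S
  (each unordered pair counted once; d is symmetric).\<close>
definition dsum :: "('a \<Rightarrow> 'a \<Rightarrow> real) \<Rightarrow> 'a set \<Rightarrow> real" where
  "dsum d S = (\<Sum>u \<in> S. \<Sum>v \<in> S. if u \<noteq> v then d u v else 0) / 2"

definition phi :: "('a set \<Rightarrow> real) \<Rightarrow> real \<Rightarrow> ('a \<Rightarrow> 'a \<Rightarrow> real) \<Rightarrow> 'a set \<Rightarrow> real" where
  "phi f lam d S = f S + lam * dsum d S"

definition improving_swap ::
  "'a set \<Rightarrow> 'a set set \<Rightarrow> ('a set \<Rightarrow> real) \<Rightarrow> 'a set \<Rightarrow> 'a set \<Rightarrow> bool" where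
  "improving_swap U F \<phi> S S' \<longleftrightarrow>
     (\<exists>u \<in> U - S. \<exists>v \<in> S. S' = insert u (S - {v}) \<and> S' \<in> F \<and> \<phi> S' > \<phi> S)"

end

theory Submission
  imports Defs
begin

text \<open>
  Complete the optimum to an independent set \<open>Q\<close> of the same rank as the local optimum \<open>S\<close>.
  Hall's theorem yields a bijection \<open>\<pi>\<close> from \<open>Q - S\<close> onto \<open>S - Q\<close> such that every swap
  \<open>S - \<pi> b + b\<close> is independent; none of these swaps improves \<open>\<phi>\<close>. Summing the resulting
  inequalities, submodularity bounds \<open>f Q\<close> by \<open>2 f S\<close> plus distance terms, and averaging the
  relaxed triangle inequality over the swaps bounds the distances inside \<open>Q - S\<close> by \<open>2\<alpha>\<close>
  times the cross distances. When \<open>|Q - S| = 2\<close> and \<open>S \<inter> Q = {}\<close> no common point is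
  available for the triangle inequality, but then \<open>Q\<close> is an independent pair and the choice of
  the initial pair \<open>{x, y} \<subseteq> S\<close> gives the bound directly.
\<close>

definition hall_condition :: "('i \<Rightarrow> 'b set) \<Rightarrow> 'i set \<Rightarrow> bool" where
  "hall_condition N I \<longleftrightarrow> (\<forall>X\<subseteq>I. card X \<le> card (\<Union>(N ` X)))"

lemma hall_condition_subset: "hall_condition N I \<Longrightarrow> J \<subseteq> I \<Longrightarrow> hall_condition N J"
  unfolding hall_condition_def by blast

lemma hall_condition_remove_tight:
  assumes fin: "finite I" "\<forall>i\<in>I. finite (N i)" and hall: "hall_condition N I"
    and X: "X \<subseteq> I" "card (\<Union>(N ` X)) \<le> card X"
  shows "hall_condition (\<lambda>i. N i - \<Union>(N ` X)) (I - X)"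
  unfolding hall_condition_def
proof (intro allI impI)
  fix Y assume Y: "Y \<subseteq> I - X"
  let ?M = "\<Union>(N ` X)" and ?NYX = "\<Union>(N ` (Y \<union> X))"
  have YX: "Y \<union> X \<subseteq> I" using Y X by auto
  have fin_YX: "finite ?NYX" using YX fin finite_subset by blast
  have M_sub: "?M \<subseteq> ?NYX" by auto
  have "card (\<Union>i\<in>Y. N i - ?M) = card ?NYX - card ?M"
  proof -
    have "(\<Union>i\<in>Y. N i - ?M) = ?NYX - ?M" by auto
    then show ?thesis using card_Diff_subset[OF finite_subset[OF M_sub fin_YX] M_sub] by simp
  qed
  moreover have "card (Y \<union> X) \<le> card ?NYX" using hall YX unfolding hall_condition_def by blast
  moreover have "card (Y \<union> X) = card Y + card X"
    using Y X fin(1) by (subst card_Un_disjoint) (auto intro: finite_subset)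
  moreover have "card ?M \<le> card ?NYX" using card_mono[OF fin_YX M_sub] .
  ultimately show "card Y \<le> card (\<Union>i\<in>Y. N i - ?M)" using X(2) by linarith
qed

lemma hall_condition_remove_element:
  assumes fin: "finite I" "\<forall>i\<in>I. finite (N i)" and i0: "i0 \<in> I"
    and strict: "\<And>Y. Y \<subseteq> I \<Longrightarrow> Y \<noteq> {} \<Longrightarrow> Y \<noteq> I \<Longrightarrow> card Y < card (\<Union>(N ` Y))"
  shows "hall_condition (\<lambda>i. N i - {a}) (I - {i0})"
  unfolding hall_condition_def
proof (intro allI impI)
  fix Y assume Y: "Y \<subseteq> I - {i0}"
  show "card Y \<le> card (\<Union>i\<in>Y. N i - {a})"
  proof (cases "Y = {}")
    case False
    have eq: "(\<Union>i\<in>Y. N i - {a}) = \<Union>(N ` Y) - {a}" by auto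
    have "card Y < card (\<Union>(N ` Y))" using strict Y i0 False by blast
    moreover have "finite (\<Union>(N ` Y))" using Y fin finite_subset by blast
    then have "card (\<Union>(N ` Y)) - 1 \<le> card (\<Union>(N ` Y) - {a})"
      by (cases "a \<in> \<Union>(N ` Y)") auto
    ultimately show ?thesis unfolding eq by linarith
  qed simp
qed

lemma representatives_glue:
  assumes X: "X \<subseteq> I" and g1: "inj_on g1 X" "\<forall>i\<in>X. g1 i \<in> N i"
    and g2: "inj_on g2 (I - X)" "\<forall>i\<in>I - X. g2 i \<in> N i - \<Union>(N ` X)"
  shows "\<exists>g. inj_on g I \<and> (\<forall>i\<in>I. g i \<in> N i)"
proof -
  define g where "g i = (if i \<in> X then g1 i else g2 i)" for i
  have "inj_on g X" using g1(1) by (simp add: g_def inj_on_def)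
  moreover have "inj_on g (I - X)" using g2(1) by (simp add: g_def inj_on_def)
  moreover have "g ` X \<subseteq> \<Union>(N ` X)" using g1(2) by (auto simp: g_def)
  moreover have "g ` (I - X) \<inter> \<Union>(N ` X) = {}" using g2(2) by (auto simp: g_def)
  ultimately have "inj_on g (X \<union> (I - X))" by (simp only: inj_on_Un) blast
  moreover have "X \<union> (I - X) = I" using X by auto
  ultimately show ?thesis using g1(2) g2(2) by (auto simp: g_def)
qed

lemma representatives_extend:
  assumes i0: "i0 \<in> I" and a: "a \<in> N i0"
    and g: "inj_on g (I - {i0})" "\<forall>i\<in>I - {i0}. g i \<in> N i - {a}"
  shows "\<exists>g. inj_on g I \<and> (\<forall>i\<in>I. g i \<in> N i)"
proof -
  have "inj_on (g(i0 := a)) (insert i0 (I - {i0}))"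
    using g by (simp add: inj_on_def) blast
  moreover have "insert i0 (I - {i0}) = I" using i0 by blast
  ultimately show ?thesis using g(2) a by auto
qed

theorem Hall_marriage:
  assumes "finite I" "\<forall>i\<in>I. finite (N i)" "hall_condition N I"
  shows "\<exists>g. inj_on g I \<and> (\<forall>i\<in>I. g i \<in> N i)"
  using assms
proof (induction "card I" arbitrary: I N rule: less_induct)
  case less
  note fin = less.prems(1,2) and hall = less.prems(3)
  have IH: "\<exists>g. inj_on g J \<and> (\<forall>i\<in>J. g i \<in> M i)"
    if "J \<subseteq> I" "card J < card I" "\<And>i. i \<in> J \<Longrightarrow> M i \<subseteq> N i" "hall_condition M J" for J M
  proof (rule less.hyps[OF that(2) _ _ that(4)])
    show "finite J" using that(1) fin(1) by (rule finite_subset)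
    show "\<forall>i\<in>J. finite (M i)" using that(1,3) fin(2) by (meson finite_subset subsetD)
  qed
  show ?case
  proof (cases "\<exists>X. X \<subseteq> I \<and> X \<noteq> {} \<and> X \<noteq> I \<and> card (\<Union>(N ` X)) \<le> card X")
    case True
    \<comment> \<open>a tight proper subset \<open>X\<close>: match \<open>X\<close> and \<open>I - X\<close> separately, the latter avoiding \<open>N ` X\<close>\<close>
    then obtain X where X: "X \<subseteq> I" "X \<noteq> {}" "X \<noteq> I" "card (\<Union>(N ` X)) \<le> card X" by blast
    have fin_X: "finite X" using X(1) fin(1) by (rule finite_subset)
    have "card X < card I" using X fin(1) by (simp add: psubset_card_mono psubset_eq)
    then obtain g1 where g1: "inj_on g1 X" "\<forall>i\<in>X. g1 i \<in> N i"
      using IH[OF X(1)] hall_condition_subset[OF hall X(1)] by blast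
    have "card X > 0" using fin_X X(2) by auto
    then have "card (I - X) < card I"
      using card_Diff_subset[OF fin_X X(1)] card_mono[OF fin(1) X(1)] by linarith
    then obtain g2 where g2: "inj_on g2 (I - X)" "\<forall>i\<in>I - X. g2 i \<in> N i - \<Union>(N ` X)"
      using IH[of "I - X" "\<lambda>i. N i - \<Union>(N ` X)"] hall_condition_remove_tight[OF fin hall X(1,4)]
      by blast
    show ?thesis by (rule representatives_glue[OF X(1) g1 g2])
  next
    case no_tight: False
    then have strict: "card Y < card (\<Union>(N ` Y))" if "Y \<subseteq> I" "Y \<noteq> {}" "Y \<noteq> I" for Y
      using that not_le by blast
    show ?thesis
    proof (cases "I = {}")
      case False
      then obtain i0 where i0: "i0 \<in> I" by blast
      have "card {i0} \<le> card (\<Union>(N ` {i0}))" using hall i0 unfolding hall_condition_def by blast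
      then have "N i0 \<noteq> {}" by auto
      then obtain a where a: "a \<in> N i0" by blast
      have "card (I - {i0}) < card I" using fin(1) i0 by (rule card_Diff1_less)
      then obtain g where g: "inj_on g (I - {i0})" "\<forall>i\<in>I - {i0}. g i \<in> N i - {a}"
        using IH[of "I - {i0}" "\<lambda>i. N i - {a}"] hall_condition_remove_element[OF fin i0 strict]
        by blast
      show ?thesis using representatives_extend[of i0 I a N g] i0 a g by blast
    qed simp
  qed
qed

lemma card_insert_Diff_singleton:
  "finite S \<Longrightarrow> a \<in> S \<Longrightarrow> b \<notin> S \<Longrightarrow> card (insert b (S - {a})) = card S"
  by (metis card_Suc_Diff1 card_insert_disjoint finite_Diff Diff_iff)

lemma matroid_indep_finite:
  "matroid U F \<Longrightarrow> I \<in> F \<Longrightarrow> finite I \<and> I \<subseteq> U"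
  unfolding matroid_def by (meson PowD finite_subset subsetD)

lemma matroid_indep_subset: "matroid U F \<Longrightarrow> B \<in> F \<Longrightarrow> A \<subseteq> B \<Longrightarrow> A \<in> F"
  unfolding matroid_def by blast

lemma matroid_augment:
  "matroid U F \<Longrightarrow> A \<in> F \<Longrightarrow> B \<in> F \<Longrightarrow> card A < card B \<Longrightarrow> \<exists>e\<in>B - A. insert e A \<in> F"
  unfolding matroid_def by blast

lemma matroid_extend_to_card:
  assumes "matroid U F" "I \<in> F" "J \<in> F" "card I \<le> card J"
  shows "\<exists>Z\<in>F. I \<subseteq> Z \<and> Z \<subseteq> I \<union> J \<and> card Z = card J"
  using assms
proof (induction "card J - card I" arbitrary: I)
  case (Suc n)
  then have "card I < card J" by simp
  then obtain e where e: "e \<in> J - I" "insert e I \<in> F"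
    using matroid_augment[OF Suc.prems(1-3)] by blast
  have "card (insert e I) = Suc (card I)"
    using e matroid_indep_finite[OF Suc.prems(1,2)] by simp
  then obtain Z where "Z \<in> F" "insert e I \<subseteq> Z" "Z \<subseteq> insert e I \<union> J" "card Z = card J"
    using Suc.hyps(1)[OF _ Suc.prems(1) e(2) Suc.prems(3)] Suc.hyps(2) by fastforce
  then show ?case using e by blast
qed auto

lemma basis_card_max:
  assumes M: "matroid U F" and B: "basis U F B" and I: "I \<in> F"
  shows "card I \<le> card B"
proof (rule ccontr)
  assume "\<not> card I \<le> card B"
  then obtain e where "e \<in> I - B" "insert e B \<in> F"
    using matroid_augment[OF M _ I] B unfolding basis_def by (meson not_le)
  moreover have "e \<in> U" using \<open>e \<in> I - B\<close> matroid_indep_finite[OF M I] by blast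
  ultimately show False using B unfolding basis_def by blast
qed

lemma improving_swaps_invariant:
  assumes M: "matroid U F" and steps: "(improving_swap U F \<phi>)\<^sup>*\<^sup>* S0 S" and S0: "S0 \<in> F"
  shows "S \<in> F \<and> card S = card S0 \<and> \<phi> S0 \<le> \<phi> S"
  using steps
proof (induction rule: rtranclp_induct)
  case (step S S')
  then obtain u v where uv: "u \<in> U - S" "v \<in> S" "S' = insert u (S - {v})" "S' \<in> F" "\<phi> S' > \<phi> S"
    unfolding improving_swap_def by blast
  have "finite S" using matroid_indep_finite[OF M] step by blast
  then have "card S' = card S" unfolding uv(3) using uv by (intro card_insert_Diff_singleton) auto
  then show ?case using step uv by simp
qed (use S0 in simp)

text \<open>Extending \<open>Y + b\<close> to the rank of \<open>S\<close> inside \<open>S + b\<close> drops exactly one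
  element of \<open>S\<close>, and that element cannot lie in \<open>Y\<close>.\<close>
lemma matroid_exchange_from_subset:
  assumes M: "matroid U F" and S: "S \<in> F" and rk: "\<forall>I\<in>F. card I \<le> card S"
    and Y: "Y \<subseteq> S" "b \<notin> S" "insert b Y \<in> F"
  shows "\<exists>a\<in>S - Y. insert b (S - {a}) \<in> F"
proof -
  have fin_S: "finite S" using matroid_indep_finite[OF M S] by blast
  obtain Z where Z: "Z \<in> F" "insert b Y \<subseteq> Z" "Z \<subseteq> insert b S" "card Z = card S"
    using matroid_extend_to_card[OF M Y(3) S] rk Y by blast
  have "\<not> insert b S \<subseteq> Z"
  proof
    assume "insert b S \<subseteq> Z"
    then have "card (insert b S) \<le> card Z" using fin_S Z(3) by (intro card_mono) (auto intro: finite_subset)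
    then show False using Z(4) Y(2) fin_S by simp
  qed
  then obtain a where a: "a \<in> insert b S" "a \<notin> Z" by blast
  have aS: "a \<in> S - Y" using a Z(2) by auto
  have "Z = insert b (S - {a})"
  proof (rule card_subset_eq)
    show "card Z = card (insert b (S - {a}))"
      using Z(4) card_insert_Diff_singleton[OF fin_S _ Y(2), of a] aS by simp
  qed (use fin_S Z(3) a in auto)
  then show ?thesis using Z(1) aS by blast
qed

lemma exchange_bijection:
  assumes M: "matroid U F" and S: "S \<in> F" and T: "T \<in> F" and card_eq: "card T = card S"
    and rk: "\<forall>I\<in>F. card I \<le> card S"
  shows "\<exists>\<pi>. bij_betw \<pi> (T - S) (S - T) \<and> (\<forall>b\<in>T - S. insert b (S - {\<pi> b}) \<in> F)"
proof -
  define N where "N b = {a \<in> S - T. insert b (S - {a}) \<in> F}" for b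
  have fin: "finite S" "finite T" using matroid_indep_finite[OF M] S T by auto
  have hall: "hall_condition N (T - S)"
    unfolding hall_condition_def
  proof (intro allI impI)
    fix X assume X: "X \<subseteq> T - S"
    define Y where "Y = (S \<inter> T) \<union> \<Union>(N ` X)"
    have Y_sub: "Y \<subseteq> S" unfolding Y_def N_def by auto
    have "card (S \<inter> T \<union> X) \<le> card Y"
    proof (rule ccontr)
      assume "\<not> ?thesis"
      moreover have "S \<inter> T \<union> X \<in> F" using matroid_indep_subset[OF M T, of "S \<inter> T \<union> X"] X by blast
      ultimately obtain e where e: "e \<in> (S \<inter> T \<union> X) - Y" "insert e Y \<in> F"
        using matroid_augment[OF M matroid_indep_subset[OF M S Y_sub]] by fastforce
      then have eX: "e \<in> X" unfolding Y_def by auto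
      then obtain a where "a \<in> S - Y" "insert e (S - {a}) \<in> F"
        using matroid_exchange_from_subset[OF M S rk Y_sub _ e(2)] X by auto
      then show False using eX unfolding Y_def N_def by auto
    qed
    moreover have "card (S \<inter> T \<union> X) = card (S \<inter> T) + card X"
      using X fin by (subst card_Un_disjoint) (auto intro: finite_subset)
    moreover have "card Y \<le> card (S \<inter> T) + card (\<Union>(N ` X))" unfolding Y_def by (rule card_Un_le)
    ultimately show "card X \<le> card (\<Union>(N ` X))" by linarith
  qed
  obtain g where g: "inj_on g (T - S)" "\<forall>b\<in>T - S. g b \<in> N b"
    using Hall_marriage[OF _ _ hall] fin unfolding N_def by auto
  have "card (T - S) = card (S - T)"
    using card_eq fin by (simp add: card_Diff_subset_Int Int_commute)
  then have "g ` (T - S) = S - T"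
    using g fin card_image[OF g(1)] by (intro card_subset_eq) (auto simp: N_def)
  then show ?thesis using g unfolding bij_betw_def N_def by auto
qed

lemma submodularD:
  "submodular U f \<Longrightarrow> S \<subseteq> T \<Longrightarrow> T \<subseteq> U \<Longrightarrow> u \<in> U \<Longrightarrow> u \<notin> T \<Longrightarrow>
    f (insert u T) - f T \<le> f (insert u S) - f S"
  unfolding submodular_def by blast

lemma submodular_union_gain_le:
  assumes sm: "submodular U f" and SU: "S \<subseteq> U" and fin: "finite B" and BU: "B \<subseteq> U"
    and disj: "B \<inter> S = {}"
  shows "f (S \<union> B) - f S \<le> (\<Sum>b\<in>B. f (insert b S) - f S)"
  using fin BU disj
proof (induction B rule: finite_induct)
  case (insert x B)
  have "f (insert x (S \<union> B)) - f (S \<union> B) \<le> f (insert x S) - f S"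
    using insert SU by (intro submodularD[OF sm]) auto
  then show ?case using insert by simp
qed simp

lemma submodular_removal_loss_le:
  assumes sm: "submodular U f" and SU: "S \<subseteq> U" and fin: "finite A" and AS: "A \<subseteq> S"
  shows "(\<Sum>a\<in>A. f S - f (S - {a})) \<le> f S - f (S - A)"
  using fin AS
proof (induction A rule: finite_induct)
  case (insert a A)
  have "f (insert a (S - {a})) - f (S - {a}) \<le> f (insert a (S - A - {a})) - f (S - A - {a})"
    using SU insert.prems by (intro submodularD[OF sm]) auto
  moreover have "insert a (S - {a}) = S" "insert a (S - A - {a}) = S - A"
    using insert by auto
  moreover have "S - insert a A = S - A - {a}" by auto
  ultimately show ?case using insert by simp
qed simp

definition cross_dist :: "('a \<Rightarrow> 'a \<Rightarrow> real) \<Rightarrow> 'a set \<Rightarrow> 'a set \<Rightarrow> real" where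
  "cross_dist d X Y = (\<Sum>x\<in>X. \<Sum>y\<in>Y. d x y)"

lemma dsum_eq_cross_dist: "\<forall>u\<in>T. d u u = 0 \<Longrightarrow> dsum d T = cross_dist d T T / 2"
  unfolding dsum_def cross_dist_def by (simp, intro sum.cong) auto

lemma cross_dist_Un_right:
  "finite Y1 \<Longrightarrow> finite Y2 \<Longrightarrow> Y1 \<inter> Y2 = {} \<Longrightarrow>
    cross_dist d X (Y1 \<union> Y2) = cross_dist d X Y1 + cross_dist d X Y2"
  unfolding cross_dist_def by (simp add: sum.union_disjoint sum.distrib)

lemma cross_dist_Un_left:
  "finite X1 \<Longrightarrow> finite X2 \<Longrightarrow> X1 \<inter> X2 = {} \<Longrightarrow>
    cross_dist d (X1 \<union> X2) Y = cross_dist d X1 Y + cross_dist d X2 Y"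
  unfolding cross_dist_def by (simp add: sum.union_disjoint)

lemma cross_dist_commute:
  "\<forall>u\<in>X. \<forall>v\<in>Y. d u v = d v u \<Longrightarrow> cross_dist d X Y = cross_dist d Y X"
  unfolding cross_dist_def by (subst sum.swap) (simp cong: sum.cong)

lemma cross_dist_nonneg: "\<forall>u\<in>X. \<forall>v\<in>Y. d u v \<ge> 0 \<Longrightarrow> cross_dist d X Y \<ge> 0"
  unfolding cross_dist_def by (simp add: sum_nonneg)

lemma cross_dist_self_Un:
  assumes "finite X" "finite Y" "X \<inter> Y = {}" "\<forall>u\<in>X. \<forall>v\<in>Y. d u v = d v u"
  shows "cross_dist d (X \<union> Y) (X \<union> Y) = cross_dist d X X + 2 * cross_dist d X Y + cross_dist d Y Y"
  using assms cross_dist_commute[of X Y d]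
  by (simp add: cross_dist_Un_left cross_dist_Un_right Int_commute)

lemma cross_dist_self_mono:
  assumes "X \<subseteq> Y" "finite Y" "\<forall>u\<in>Y. \<forall>v\<in>Y. d u v \<ge> 0"
  shows "cross_dist d X X \<le> cross_dist d Y Y"
proof -
  have "(\<Sum>x\<in>X. \<Sum>y\<in>X. d x y) \<le> (\<Sum>x\<in>X. \<Sum>y\<in>Y. d x y)"
  proof (rule sum_mono)
    fix x assume "x \<in> X"
    then show "(\<Sum>y\<in>X. d x y) \<le> (\<Sum>y\<in>Y. d x y)" using assms by (intro sum_mono2) auto
  qed
  also have "\<dots> \<le> (\<Sum>x\<in>Y. \<Sum>y\<in>Y. d x y)"
    by (rule sum_mono2) (use assms in \<open>auto intro!: sum_nonneg\<close>)
  finally show ?thesis unfolding cross_dist_def .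
qed

lemma cross_dist_self_insert:
  assumes fin: "finite R" and x: "x \<notin> R" and sym: "\<forall>r\<in>R. d r x = d x r"
  shows "cross_dist d (insert x R) (insert x R) = cross_dist d R R + 2 * (\<Sum>r\<in>R. d x r) + d x x"
proof -
  have "cross_dist d (insert x R) (insert x R)
      = (d x x + (\<Sum>r\<in>R. d x r)) + (\<Sum>r\<in>R. d r x + (\<Sum>y\<in>R. d r y))"
    unfolding cross_dist_def using fin x by simp
  also have "(\<Sum>r\<in>R. d r x + (\<Sum>y\<in>R. d r y)) = (\<Sum>r\<in>R. d x r) + cross_dist d R R"
    unfolding cross_dist_def sum.distrib using sym by (simp cong: sum.cong)
  finally show ?thesis by simp
qed

lemma cross_dist_self_swap:
  assumes fin: "finite S" and a: "a \<in> S" and b: "b \<notin> S"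
    and sym: "\<forall>u\<in>insert b S. \<forall>v\<in>insert b S. d u v = d v u" and zero: "d a a = 0" "d b b = 0"
  shows "cross_dist d (insert b (S - {a})) (insert b (S - {a}))
    = cross_dist d S S + 2 * (\<Sum>s\<in>S. d b s) - 2 * d b a - 2 * (\<Sum>s\<in>S. d a s)"
proof -
  have sym_b: "\<forall>r\<in>S - {a}. d r b = d b r" and sym_a: "\<forall>r\<in>S - {a}. d r a = d a r"
    using sym a by blast+
  have "cross_dist d (insert b (S - {a})) (insert b (S - {a}))
      = cross_dist d (S - {a}) (S - {a}) + 2 * (\<Sum>r\<in>S - {a}. d b r)"
    using cross_dist_self_insert[OF _ _ sym_b] fin b zero by simp
  moreover have "cross_dist d S S = cross_dist d (S - {a}) (S - {a}) + 2 * (\<Sum>r\<in>S - {a}. d a r)"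
    using cross_dist_self_insert[OF _ _ sym_a] fin a zero by (simp add: insert_absorb)
  ultimately show ?thesis using fin a zero by (simp add: sum_diff1)
qed

definition off_matching_dist :: "('a \<Rightarrow> 'a \<Rightarrow> real) \<Rightarrow> ('a \<Rightarrow> 'a) \<Rightarrow> 'a set \<Rightarrow> 'a set \<Rightarrow> real" where
  "off_matching_dist d \<pi> B A = (\<Sum>b\<in>B. \<Sum>a\<in>A - {\<pi> b}. d b a)"

lemma swap_dist_sum:
  assumes fin: "finite A" "finite C" and disj: "A \<inter> C = {}" and bij: "bij_betw \<pi> B A"
  shows "(\<Sum>b\<in>B. (\<Sum>s\<in>A \<union> C. d b s) - d b (\<pi> b) - (\<Sum>s\<in>A \<union> C. d (\<pi> b) s))
    = off_matching_dist d \<pi> B A + cross_dist d B C - cross_dist d A A - cross_dist d A C"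
proof -
  have \<pi>A: "\<pi> b \<in> A" if "b \<in> B" for b using bij_betwE[OF bij] that by blast
  have "(\<Sum>b\<in>B. \<Sum>s\<in>A \<union> C. d (\<pi> b) s) = cross_dist d A (A \<union> C)"
    unfolding cross_dist_def by (rule sum.reindex_bij_betw[OF bij])
  moreover have "(\<Sum>b\<in>B. \<Sum>s\<in>A \<union> C. d b s) = cross_dist d B (A \<union> C)"
    unfolding cross_dist_def ..
  moreover have "(\<Sum>b\<in>B. \<Sum>a\<in>A. d b a) - (\<Sum>b\<in>B. d b (\<pi> b)) = off_matching_dist d \<pi> B A"
    unfolding off_matching_dist_def using fin \<pi>A by (simp add: sum_diff1 sum_subtractf)
  ultimately show ?thesis
    using cross_dist_Un_right[OF fin disj] unfolding cross_dist_def by (simp add: sum_subtractf)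
qed

lemma ratio_arith_generic:
  fixes a L fQ fS BB OM BC CC AA AC :: real
  assumes "a \<ge> 1" "L \<ge> 0" "fQ \<ge> 0" "fS \<ge> 0" "BC \<ge> 0" "CC \<ge> 0" "AA \<ge> 0" "AC \<ge> 0"
    and BB: "BB \<le> 2 * a * OM" and loc: "fQ - 2 * fS + L * (OM + BC - AA - AC) \<le> 0"
  shows "fQ + L * ((BB + 2 * BC + CC) / 2) \<le> 2 * a\<^sup>2 * (fS + L * ((AA + 2 * AC + CC) / 2))"
proof -
  have sq: "a\<^sup>2 - a \<ge> 0" "a\<^sup>2 - 1 \<ge> 0" using assms(1) self_le_power[of a 2] by auto
  have "L * BB \<le> L * (2 * a * OM)" using BB assms(2) by (rule mult_left_mono)
  moreover have "a * (fQ - 2 * fS + L * (OM + BC - AA - AC)) \<le> 0"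
    using assms(1) loc by (simp add: mult_nonneg_nonpos)
  moreover have "(a - 1) * (fQ + L * BC) \<ge> 0" "(a\<^sup>2 - a) * (2 * fS + L * AA + 2 * L * AC) \<ge> 0"
    "(a\<^sup>2 - 1) * (L * CC) \<ge> 0" "a * (L * AC) \<ge> 0" "L * CC \<ge> 0"
    using assms sq by (auto intro!: mult_nonneg_nonneg)
  ultimately show ?thesis unfolding power2_eq_square by (simp add: field_simps)
qed

lemma ratio_arith_pair_core:
  fixes a Y Z :: real
  assumes "a \<ge> 1" "Y \<ge> 0" "Z \<ge> 0" "Y \<le> a * Z"
  shows "3 * (a * Y) + a * Z \<le> 2 * (a\<^sup>2 * Y) + 2 * (a\<^sup>2 * Z)"
proof (cases "2 * a \<ge> 3")
  case True
  then have "3 * (a * Y) \<le> 2 * (a\<^sup>2 * Y)"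
    using assms mult_right_mono[of 3 "2 * a" "a * Y"] by (simp add: power2_eq_square algebra_simps)
  moreover have "a * Z \<le> 2 * (a\<^sup>2 * Z)"
    using assms self_le_power[of a 2] mult_right_mono[of a "a\<^sup>2" Z] by simp
  ultimately show ?thesis by linarith
next
  case False
  \<comment> \<open>the bound is linear in \<open>Y\<close> with a negative slope, so \<open>Y = a Z\<close> is the worst case\<close>
  have "(3 * a - 2 * a\<^sup>2) * Y \<le> (3 * a - 2 * a\<^sup>2) * (a * Z)"
    using False assms by (intro mult_left_mono) (auto simp: power2_eq_square)
  moreover have "a * ((2 * a + 1) * (a - 1)) * Z \<ge> 0" using assms by simp
  ultimately show ?thesis by (simp add: algebra_simps power2_eq_square)
qed

lemma ratio_arith_pair:
  fixes a L fQ fS x s y BC AC CC :: real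
  assumes "a \<ge> 1" "L \<ge> 0" "fQ \<ge> 0" "fS \<ge> 0" "y \<ge> 0" "BC \<ge> 0" "AC \<ge> 0" "CC \<ge> 0"
    and x1: "x \<le> a\<^sup>2 * (s + y)" and x2: "x \<le> a * BC" and y1: "y \<le> a * AC"
    and loc: "fQ - 2 * fS + L * (s + BC - 2 * y - AC) \<le> 0"
  shows "fQ + L * ((2 * x + 2 * BC + CC) / 2) \<le> 2 * a\<^sup>2 * (fS + L * ((2 * y + 2 * AC + CC) / 2))"
proof -
  \<comment> \<open>\<open>a x = x + (a - 1) x\<close>, bounding the two summands by \<open>x1\<close> and \<open>x2\<close>\<close>
  have "(a - 1) * x \<le> (a - 1) * (a * BC)" using x2 assms(1) by (intro mult_left_mono) auto
  then have "a * x \<le> a * (a * (s + y) + (a - 1) * BC)"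
    using x1 by (simp add: algebra_simps power2_eq_square)
  then have "x \<le> a * (s + y) + (a - 1) * BC" using assms(1) by simp
  then have "L * x \<le> L * (a * (s + y) + (a - 1) * BC)" using assms(2) by (rule mult_left_mono)
  moreover have "a * (fQ - 2 * fS + L * (s + BC - 2 * y - AC)) \<le> 0"
    using assms(1) loc by (simp add: mult_nonneg_nonpos)
  moreover have "3 * (a * (L * y)) + a * (L * AC) \<le> 2 * (a\<^sup>2 * (L * y)) + 2 * (a\<^sup>2 * (L * AC))"
    using assms mult_left_mono[OF y1 assms(2)] by (intro ratio_arith_pair_core) (auto simp: algebra_simps)
  moreover have "(a - 1) * fQ \<ge> 0" "(a\<^sup>2 - a) * fS \<ge> 0" "(a\<^sup>2 - 1) * (L * CC) \<ge> 0" "L * CC \<ge> 0"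
    using assms self_le_power[of a 2] by (auto intro!: mult_nonneg_nonneg)
  ultimately show ?thesis unfolding power2_eq_square by (simp add: field_simps)
qed

locale relaxed_semimetric_space =
  fixes \<alpha> :: real and U :: "'a set" and d :: "'a \<Rightarrow> 'a \<Rightarrow> real"
  assumes relaxed_semimetric: "relaxed_semimetric \<alpha> U d"
begin

lemma alpha_ge_1: "\<alpha> \<ge> 1"
  using relaxed_semimetric unfolding relaxed_semimetric_def by blast

lemma d_nonneg: "u \<in> U \<Longrightarrow> v \<in> U \<Longrightarrow> d u v \<ge> 0"
  using relaxed_semimetric unfolding relaxed_semimetric_def by blast

lemma d_commute: "u \<in> U \<Longrightarrow> v \<in> U \<Longrightarrow> d u v = d v u"
  using relaxed_semimetric unfolding relaxed_semimetric_def by blast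

lemma d_self: "u \<in> U \<Longrightarrow> d u u = 0"
  using relaxed_semimetric unfolding relaxed_semimetric_def by blast

lemma d_relaxed_triangle: "u \<in> U \<Longrightarrow> v \<in> U \<Longrightarrow> w \<in> U \<Longrightarrow> d u v \<le> \<alpha> * (d u w + d w v)"
  using relaxed_semimetric d_commute[of u w] unfolding relaxed_semimetric_def
  by (metis add.commute)

lemma card_mult_dist_le:
  assumes "u \<in> U" "v \<in> U" "A \<subseteq> U"
  shows "real (card A) * d u v \<le> \<alpha> * ((\<Sum>a\<in>A. d u a) + (\<Sum>a\<in>A. d v a))"
proof -
  have "real (card A) * d u v = (\<Sum>a\<in>A. d u v)" by simp
  also have "\<dots> \<le> (\<Sum>a\<in>A. \<alpha> * (d u a + d v a))"
    using assms d_relaxed_triangle d_commute by (intro sum_mono) (metis subsetD)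
  finally show ?thesis by (simp add: sum.distrib sum_distrib_left distrib_left)
qed

text \<open>For a bijection \<open>\<pi>\<close> from \<open>B\<close> onto \<open>A\<close> with \<open>|B| = k \<ge> 3\<close>, each ordered pair
  \<open>b \<noteq> b'\<close> is bounded through the \<open>k - 2\<close> points \<open>A - {\<pi> b, \<pi> b'}\<close>, and every term
  \<open>d b a\<close> with \<open>a \<noteq> \<pi> b\<close> is then used exactly \<open>2 (k - 2)\<close> times.\<close>
lemma cross_dist_self_le_off_matching:
  assumes bij: "bij_betw \<pi> B A" and fin: "finite B" and BU: "B \<subseteq> U" and AU: "A \<subseteq> U"
    and k3: "card B \<ge> 3"
  shows "cross_dist d B B \<le> 2 * \<alpha> * off_matching_dist d \<pi> B A"
proof -
  define k where "k = card B"
  define E where "E b = (\<Sum>a\<in>A - {\<pi> b}. d b a)" for b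
  define G where "G b b' = (\<Sum>a\<in>A - {\<pi> b, \<pi> b'}. d b a)" for b b'
  define P where "P b b' = (if b' = b then 0 else G b b')" for b b'
  have fin_A: "finite A" using bij fin bij_betw_finite by blast
  have inj: "inj_on \<pi> B" and img: "\<pi> ` B = A" using bij unfolding bij_betw_def by auto
  have pair: "(real k - 2) * d b b' \<le> \<alpha> * (G b b' + G b' b)"
    if bb: "b \<in> B" "b' \<in> B" "b \<noteq> b'" for b b'
  proof -
    have "\<pi> b \<noteq> \<pi> b'" "\<pi> b \<in> A" "\<pi> b' \<in> A" using inj img bb unfolding inj_on_def by auto
    then have "real (card (A - {\<pi> b, \<pi> b'})) = real k - 2"
      using fin_A k3 bij_betw_same_card[OF bij] unfolding k_def by (simp add: card_Diff_subset)
    moreover have "real (card (A - {\<pi> b, \<pi> b'})) * d b b' \<le> \<alpha> * (G b b' + G b' b)"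
      unfolding G_def insert_commute[of "\<pi> b'"] using bb BU AU by (intro card_mult_dist_le) auto
    ultimately show ?thesis by simp
  qed
  have row: "(\<Sum>b'\<in>B. P b b') = (real k - 2) * E b" if b: "b \<in> B" for b
  proof -
    have G_eq: "G b b' = E b - d b (\<pi> b')" if "b' \<in> B - {b}" for b'
    proof -
      have "\<pi> b' \<in> A - {\<pi> b}" using that b inj img unfolding inj_on_def by auto
      moreover have "A - {\<pi> b, \<pi> b'} = A - {\<pi> b} - {\<pi> b'}" by auto
      ultimately show ?thesis unfolding G_def E_def using fin_A by (simp add: sum_diff1)
    qed
    have "(\<Sum>b'\<in>B - {b}. d b (\<pi> b')) = (\<Sum>a\<in>\<pi> ` (B - {b}). d b a)"
      using inj by (simp add: sum.reindex inj_on_diff)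
    also have "\<pi> ` (B - {b}) = A - {\<pi> b}" using inj img b by (auto simp: inj_on_def)
    finally have "(\<Sum>b'\<in>B - {b}. d b (\<pi> b')) = E b" unfolding E_def .
    moreover have "(\<Sum>b'\<in>B. P b b') = (\<Sum>b'\<in>B - {b}. G b b')"
      unfolding P_def using fin b by (subst sum.remove[OF fin b]) (auto intro!: sum.cong)
    moreover have "real (card (B - {b})) = real k - 1" using fin b k3 unfolding k_def by simp
    ultimately show ?thesis using G_eq by (simp add: sum_subtractf algebra_simps)
  qed
  have "(real k - 2) * cross_dist d B B = (\<Sum>b\<in>B. \<Sum>b'\<in>B. if b = b' then 0 else (real k - 2) * d b b')"
    unfolding cross_dist_def sum_distrib_left using BU d_self by (intro sum.cong) auto
  also have "\<dots> \<le> (\<Sum>b\<in>B. \<Sum>b'\<in>B. \<alpha> * (P b b' + P b' b))"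
    using pair by (intro sum_mono) (auto simp: P_def)
  also have "\<dots> = \<alpha> * ((\<Sum>b\<in>B. \<Sum>b'\<in>B. P b b') + (\<Sum>b\<in>B. \<Sum>b'\<in>B. P b' b))"
    by (simp add: distrib_left sum.distrib sum_distrib_left)
  also have "(\<Sum>b\<in>B. \<Sum>b'\<in>B. P b' b) = (\<Sum>b\<in>B. \<Sum>b'\<in>B. P b b')"
    by (rule sum.swap)
  also have "(\<Sum>b\<in>B. \<Sum>b'\<in>B. P b b') = (real k - 2) * off_matching_dist d \<pi> B A"
    using row unfolding off_matching_dist_def E_def by (simp add: sum_distrib_left)
  finally have "(real k - 2) * cross_dist d B B \<le> (real k - 2) * (2 * \<alpha> * off_matching_dist d \<pi> B A)"
    by (simp add: algebra_simps)
  then show ?thesis using k3 unfolding k_def by simp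
qed

lemma cross_dist_ground_nonneg: "X \<subseteq> U \<Longrightarrow> Y \<subseteq> U \<Longrightarrow> cross_dist d X Y \<ge> 0"
  using d_nonneg by (intro cross_dist_nonneg) blast

lemma le_two_alpha_sq_mult: "t \<ge> 0 \<Longrightarrow> t \<le> 2 * \<alpha>\<^sup>2 * t"
  using alpha_ge_1 self_le_power[of \<alpha> 2] mult_right_mono[of 1 "2 * \<alpha>\<^sup>2" t] by simp

lemma dist_le_cross_dist_pair:
  assumes "u \<in> U" "v \<in> U" "u \<noteq> v" "C \<subseteq> U" "finite C" "c \<in> C"
  shows "d u v \<le> \<alpha> * cross_dist d {u, v} C"
proof -
  have "d u v \<le> \<alpha> * (d u c + d v c)"
    using d_relaxed_triangle[of u v c] d_commute[of c v] assms by auto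
  moreover have "d u c \<le> (\<Sum>c'\<in>C. d u c')" "d v c \<le> (\<Sum>c'\<in>C. d v c')"
    using assms d_nonneg by (auto intro!: member_le_sum)
  moreover have "cross_dist d {u, v} C = (\<Sum>c'\<in>C. d u c') + (\<Sum>c'\<in>C. d v c')"
    using assms(3) unfolding cross_dist_def by simp
  ultimately show ?thesis using alpha_ge_1 by (smt (verit) mult_left_mono)
qed

lemma dist_le_via_exchange:
  assumes "b1 \<in> U" "b2 \<in> U" "a1 \<in> U" "a2 \<in> U"
  shows "d b1 b2 \<le> \<alpha>\<^sup>2 * (d b1 a2 + d b2 a1 + d a1 a2)"
proof -
  have "d b1 b2 \<le> \<alpha> * (d b1 a2 + d a2 b2)" using assms by (intro d_relaxed_triangle)
  moreover have "d a2 b2 \<le> \<alpha> * (d a1 a2 + d b2 a1)"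
    using assms d_relaxed_triangle[of a2 b2 a1] d_commute[of a2 a1] d_commute[of a1 b2] by simp
  then have "\<alpha> * d a2 b2 \<le> \<alpha>\<^sup>2 * (d a1 a2 + d b2 a1)"
    using alpha_ge_1 mult_left_mono[of _ _ \<alpha>] by (simp add: power2_eq_square)
  moreover have "\<alpha> * d b1 a2 \<le> \<alpha>\<^sup>2 * d b1 a2"
    using assms alpha_ge_1 self_le_power[of \<alpha> 2] d_nonneg by (intro mult_right_mono) auto
  ultimately show ?thesis by (simp add: algebra_simps)
qed

end

locale diversity_instance = relaxed_semimetric_space \<alpha> U d
  for \<alpha> :: real and U :: "'a set" and d :: "'a \<Rightarrow> 'a \<Rightarrow> real" +
  fixes F :: "'a set set" and f :: "'a set \<Rightarrow> real" and lam :: real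
  assumes matroid: "matroid U F" and lam_nonneg: "lam \<ge> 0"
    and f_nonneg: "\<forall>T\<subseteq>U. f T \<ge> 0" and f_mono: "monotone_set_fun U f"
    and f_submodular: "submodular U f"
begin

lemma finite_subset_ground: "T \<subseteq> U \<Longrightarrow> finite T"
  using matroid unfolding matroid_def by (simp add: finite_subset)

lemma phi_eq_cross_dist:
  assumes "T \<subseteq> U"
  shows "phi f lam d T = f T + lam * (cross_dist d T T / 2)"
proof -
  have "\<forall>u\<in>T. d u u = 0" using assms d_self by blast
  then show ?thesis unfolding phi_def by (simp add: dsum_eq_cross_dist)
qed

lemma phi_split:
  assumes "T \<subseteq> U"
  shows "phi f lam d T = f T + lam * ((cross_dist d (T - R) (T - R)
    + 2 * cross_dist d (T - R) (T \<inter> R) + cross_dist d (T \<inter> R) (T \<inter> R)) / 2)"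
proof -
  have "finite (T - R)" "finite (T \<inter> R)" "(T - R) \<inter> (T \<inter> R) = {}"
    using assms finite_subset_ground by auto
  moreover have "\<forall>u\<in>T - R. \<forall>v\<in>T \<inter> R. d u v = d v u" using assms d_commute by blast
  ultimately have "cross_dist d T T = cross_dist d (T - R) (T - R)
      + 2 * cross_dist d (T - R) (T \<inter> R) + cross_dist d (T \<inter> R) (T \<inter> R)"
    using cross_dist_self_Un[of "T - R" "T \<inter> R" d] by (simp add: Un_Diff_Int)
  then show ?thesis using assms phi_eq_cross_dist by simp
qed

lemma phi_pair:
  assumes "a \<in> U" "b \<in> U" "a \<noteq> b"
  shows "phi f lam d {a, b} = f {a, b} + lam * d a b"
proof -
  have "cross_dist d {a, b} {a, b} = 2 * d a b"
    using assms d_self[of a] d_self[of b] d_commute[of b a] by (simp add: cross_dist_def)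
  then show ?thesis using assms phi_eq_cross_dist[of "{a, b}"] by simp
qed

lemma phi_nonneg:
  assumes "T \<subseteq> U"
  shows "phi f lam d T \<ge> 0"
proof -
  have "cross_dist d T T \<ge> 0" using assms d_nonneg by (intro cross_dist_nonneg) blast
  then show ?thesis using assms phi_eq_cross_dist f_nonneg lam_nonneg by simp
qed

lemma phi_mono:
  assumes "T \<subseteq> T'" "T' \<subseteq> U"
  shows "phi f lam d T \<le> phi f lam d T'"
proof -
  have "\<forall>u\<in>T'. \<forall>v\<in>T'. d u v \<ge> 0" using assms(2) d_nonneg by blast
  then have "cross_dist d T T \<le> cross_dist d T' T'"
    using assms finite_subset_ground by (intro cross_dist_self_mono)
  then have "lam * (cross_dist d T T / 2) \<le> lam * (cross_dist d T' T' / 2)"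
    using lam_nonneg by (intro mult_left_mono) auto
  moreover have "f T \<le> f T'" using f_mono assms unfolding monotone_set_fun_def by blast
  ultimately show ?thesis using assms phi_eq_cross_dist[of T] phi_eq_cross_dist[of T'] by simp
qed

lemma non_improving_swap:
  assumes no_swap: "\<not> (\<exists>S'. improving_swap U F (phi f lam d) S S')" and S: "S \<in> F"
    and b: "b \<in> U - S" and a: "a \<in> S" and swap: "insert b (S - {a}) \<in> F"
  shows "(f (insert b S) - f S) - (f S - f (S - {a}))
    + lam * ((\<Sum>s\<in>S. d b s) - d b a - (\<Sum>s\<in>S. d a s)) \<le> 0"
proof -
  let ?S' = "insert b (S - {a})"
  have SU: "S \<subseteq> U" using matroid_indep_finite[OF matroid S] by blast
  then have S'U: "?S' \<subseteq> U" using b by blast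
  have sym: "\<forall>u\<in>insert b S. \<forall>v\<in>insert b S. d u v = d v u"
    using SU b by (auto intro: d_commute)
  have "\<not> phi f lam d S < phi f lam d ?S'"
  proof
    assume "phi f lam d S < phi f lam d ?S'"
    then have "improving_swap U F (phi f lam d) S ?S'"
      unfolding improving_swap_def using b a swap by blast
    then show False using no_swap by blast
  qed
  moreover have "cross_dist d ?S' ?S'
      = cross_dist d S S + 2 * (\<Sum>s\<in>S. d b s) - 2 * d b a - 2 * (\<Sum>s\<in>S. d a s)"
    using SU a b by (intro cross_dist_self_swap[OF _ _ _ sym] finite_subset_ground d_self) auto
  moreover have "f (insert b S) - f S \<le> f ?S' - f (S - {a})"
    using SU b by (intro submodularD[OF f_submodular]) auto
  ultimately show ?thesis
    using phi_eq_cross_dist[OF SU] phi_eq_cross_dist[OF S'U] by (simp add: field_simps)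
qed

lemma exchange_value_bound:
  assumes SU: "S \<subseteq> U" and QU: "Q \<subseteq> U" and bij: "bij_betw \<pi> (Q - S) (S - Q)"
  shows "f Q - 2 * f S \<le> (\<Sum>b\<in>Q - S. (f (insert b S) - f S) - (f S - f (S - {\<pi> b})))"
proof -
  have fin: "finite (S - Q)" "finite (Q - S)" using SU QU finite_subset_ground by auto
  have "(\<Sum>b\<in>Q - S. f S - f (S - {\<pi> b})) = (\<Sum>a\<in>S - Q. f S - f (S - {a}))"
    by (rule sum.reindex_bij_betw[OF bij])
  also have "\<dots> \<le> f S - f (S - (S - Q))"
    using fin SU by (intro submodular_removal_loss_le[OF f_submodular]) auto
  also have "\<dots> \<le> f S" using f_nonneg[rule_format, of "S - (S - Q)"] SU by auto
  finally have loss: "(\<Sum>b\<in>Q - S. f S - f (S - {\<pi> b})) \<le> f S" .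
  have "f (S \<union> (Q - S)) - f S \<le> (\<Sum>b\<in>Q - S. f (insert b S) - f S)"
    using fin SU QU by (intro submodular_union_gain_le[OF f_submodular]) auto
  moreover have "f Q \<le> f (S \<union> (Q - S))"
    using f_mono SU QU unfolding monotone_set_fun_def by auto
  moreover have "(\<Sum>b\<in>Q - S. (f (insert b S) - f S) - (f S - f (S - {\<pi> b})))
      = (\<Sum>b\<in>Q - S. f (insert b S) - f S) - (\<Sum>b\<in>Q - S. f S - f (S - {\<pi> b}))"
    by (rule sum_subtractf)
  ultimately show ?thesis using loss by linarith
qed

lemma local_optimum_inequality:
  assumes no_swap: "\<not> (\<exists>S'. improving_swap U F (phi f lam d) S S')" and S: "S \<in> F" and Q: "Q \<in> F"
    and bij: "bij_betw \<pi> (Q - S) (S - Q)" and swaps: "\<forall>b\<in>Q - S. insert b (S - {\<pi> b}) \<in> F"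
  defines "A \<equiv> S - Q" and "B \<equiv> Q - S" and "C \<equiv> S \<inter> Q"
  shows "f Q - 2 * f S + lam * (off_matching_dist d \<pi> B A + cross_dist d B C
    - cross_dist d A A - cross_dist d A C) \<le> 0"
proof -
  have SU: "S \<subseteq> U" and QU: "Q \<subseteq> U" using matroid_indep_finite[OF matroid] S Q by auto
  have \<pi>A: "\<pi> b \<in> A" if "b \<in> B" for b using bij_betwE[OF bij] that unfolding A_def B_def by blast
  have nonpos: "(\<Sum>b\<in>B. (f (insert b S) - f S) - (f S - f (S - {\<pi> b}))
      + lam * ((\<Sum>s\<in>S. d b s) - d b (\<pi> b) - (\<Sum>s\<in>S. d (\<pi> b) s))) \<le> 0"
    using non_improving_swap[OF no_swap S] swaps \<pi>A QU unfolding A_def B_def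
    by (intro sum_nonpos) blast
  have dist: "(\<Sum>b\<in>B. (\<Sum>s\<in>S. d b s) - d b (\<pi> b) - (\<Sum>s\<in>S. d (\<pi> b) s))
      = off_matching_dist d \<pi> B A + cross_dist d B C - cross_dist d A A - cross_dist d A C"
  proof -
    have eq: "S = A \<union> C" and disj: "A \<inter> C = {}" unfolding A_def C_def by auto
    have "finite A" "finite C" using SU finite_subset_ground unfolding A_def C_def by auto
    moreover have "bij_betw \<pi> B A" using bij unfolding A_def B_def .
    ultimately show ?thesis unfolding eq by (rule swap_dist_sum[OF _ _ disj])
  qed
  have split: "(\<Sum>b\<in>B. (f (insert b S) - f S) - (f S - f (S - {\<pi> b}))
      + lam * ((\<Sum>s\<in>S. d b s) - d b (\<pi> b) - (\<Sum>s\<in>S. d (\<pi> b) s)))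
    = (\<Sum>b\<in>B. (f (insert b S) - f S) - (f S - f (S - {\<pi> b})))
      + lam * (\<Sum>b\<in>B. (\<Sum>s\<in>S. d b s) - d b (\<pi> b) - (\<Sum>s\<in>S. d (\<pi> b) s))"
    by (simp add: sum.distrib sum_distrib_left)
  from nonpos have "(\<Sum>b\<in>B. (f (insert b S) - f S) - (f S - f (S - {\<pi> b})))
      + lam * (off_matching_dist d \<pi> B A + cross_dist d B C - cross_dist d A A - cross_dist d A C) \<le> 0"
    unfolding split dist .
  then show ?thesis using exchange_value_bound[OF SU QU bij] unfolding B_def by linarith
qed

lemma exchange_ratio_generic:
  assumes SU: "S \<subseteq> U" and QU: "Q \<subseteq> U" and bij: "bij_betw \<pi> (Q - S) (S - Q)"
    and card_ne_2: "card (Q - S) \<noteq> 2"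
  defines "A \<equiv> S - Q" and "B \<equiv> Q - S" and "C \<equiv> S \<inter> Q"
  assumes loc: "f Q - 2 * f S + lam * (off_matching_dist d \<pi> B A + cross_dist d B C
    - cross_dist d A A - cross_dist d A C) \<le> 0"
  shows "phi f lam d Q \<le> 2 * \<alpha>\<^sup>2 * phi f lam d S"
proof -
  have sub: "A \<subseteq> U" "B \<subseteq> U" "C \<subseteq> U" unfolding A_def B_def C_def using SU QU by auto
  have BB: "cross_dist d B B \<le> 2 * \<alpha> * off_matching_dist d \<pi> B A"
  proof (cases "card B \<ge> 3")
    case True
    then show ?thesis
      using bij sub finite_subset_ground unfolding A_def B_def
      by (intro cross_dist_self_le_off_matching) auto
  next
    case False
    then have "card B \<le> 1" using card_ne_2 unfolding B_def by linarith
    then have "\<forall>b\<in>B. \<forall>b'\<in>B. b = b'" using finite_subset_ground[OF sub(2)] card_le_Suc0_iff_eq by auto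
    then have "cross_dist d B B = 0" unfolding cross_dist_def using sub(2) d_self
      by (intro sum.neutral ballI) (metis subsetD)
    moreover have "off_matching_dist d \<pi> B A \<ge> 0"
      unfolding off_matching_dist_def using sub d_nonneg by (intro sum_nonneg) blast
    ultimately show ?thesis using alpha_ge_1 by simp
  qed
  have phiS: "phi f lam d S = f S + lam * ((cross_dist d A A + 2 * cross_dist d A C + cross_dist d C C) / 2)"
    and phiQ: "phi f lam d Q = f Q + lam * ((cross_dist d B B + 2 * cross_dist d B C + cross_dist d C C) / 2)"
    using phi_split[OF SU, of Q] phi_split[OF QU, of S] unfolding A_def B_def C_def by (simp_all add: Int_commute)
  show ?thesis unfolding phiS phiQ
    using f_nonneg SU QU cross_dist_ground_nonneg sub
    by (intro ratio_arith_generic[OF alpha_ge_1 lam_nonneg _ _ _ _ _ _ BB loc]) auto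
qed

lemma exchange_ratio_two:
  assumes SU: "S \<subseteq> U" and QU: "Q \<subseteq> U" and bij: "bij_betw \<pi> (Q - S) (S - Q)"
    and card_2: "card (Q - S) = 2" and common: "S \<inter> Q \<noteq> {}"
  defines "A \<equiv> S - Q" and "B \<equiv> Q - S" and "C \<equiv> S \<inter> Q"
  assumes loc: "f Q - 2 * f S + lam * (off_matching_dist d \<pi> B A + cross_dist d B C
    - cross_dist d A A - cross_dist d A C) \<le> 0"
  shows "phi f lam d Q \<le> 2 * \<alpha>\<^sup>2 * phi f lam d S"
proof -
  have sub: "A \<subseteq> U" "B \<subseteq> U" "C \<subseteq> U" unfolding A_def B_def C_def using SU QU by auto
  obtain b1 b2 where B: "B = {b1, b2}" "b1 \<noteq> b2" using card_2 unfolding B_def by (auto simp: card_2_iff)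
  define a1 where "a1 = \<pi> b1"
  define a2 where "a2 = \<pi> b2"
  have "bij_betw \<pi> B A" using bij unfolding A_def B_def .
  then have A: "A = {a1, a2}" "a1 \<noteq> a2"
    using B unfolding a1_def a2_def bij_betw_def inj_on_def by auto
  have in_U: "b1 \<in> U" "b2 \<in> U" "a1 \<in> U" "a2 \<in> U" using sub A B by auto
  obtain c where c: "c \<in> C" using common unfolding C_def by blast
  have fin_C: "finite C" using sub(3) by (rule finite_subset_ground)
  have "cross_dist d B B = 2 * d b1 b2" "cross_dist d A A = 2 * d a1 a2"
    using A B in_U d_self d_commute[of b2 b1] d_commute[of a2 a1]
    by (simp_all add: cross_dist_def)
  moreover have "off_matching_dist d \<pi> B A = d b1 a2 + d b2 a1"
  proof -
    have "A - {a1} = {a2}" "A - {a2} = {a1}" using A by auto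
    then show ?thesis using B unfolding off_matching_dist_def a1_def a2_def by simp
  qed
  moreover have "d b1 b2 \<le> \<alpha>\<^sup>2 * (d b1 a2 + d b2 a1 + d a1 a2)"
    using in_U by (rule dist_le_via_exchange)
  moreover have "d b1 b2 \<le> \<alpha> * cross_dist d B C" "d a1 a2 \<le> \<alpha> * cross_dist d A C"
    unfolding A B using in_U A B sub fin_C c by (auto intro: dist_le_cross_dist_pair)
  moreover have "phi f lam d S
      = f S + lam * ((cross_dist d A A + 2 * cross_dist d A C + cross_dist d C C) / 2)"
    and "phi f lam d Q
      = f Q + lam * ((cross_dist d B B + 2 * cross_dist d B C + cross_dist d C C) / 2)"
    using phi_split[OF SU, of Q] phi_split[OF QU, of S] unfolding A_def B_def C_def
    by (simp_all add: Int_commute)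
  ultimately show ?thesis
    using ratio_arith_pair[OF alpha_ge_1 lam_nonneg, of "f Q" "f S" "d a1 a2"
        "cross_dist d B C" "cross_dist d A C" "cross_dist d C C" "d b1 b2" "d b1 a2 + d b2 a1"]
      loc f_nonneg SU QU sub cross_dist_ground_nonneg d_nonneg[OF in_U(3,4)]
    by (auto simp: algebra_simps)
qed

lemma local_optimum_ratio:
  assumes no_swap: "\<not> (\<exists>S'. improving_swap U F (phi f lam d) S S')" and S: "S \<in> F"
    and rank: "\<forall>I\<in>F. card I \<le> card S" and Q: "Q \<in> F" "card Q = card S"
    and not_pair: "card (Q - S) = 2 \<Longrightarrow> S \<inter> Q \<noteq> {}"
  shows "phi f lam d Q \<le> 2 * \<alpha>\<^sup>2 * phi f lam d S"
proof -
  obtain \<pi> where bij: "bij_betw \<pi> (Q - S) (S - Q)" and swaps: "\<forall>b\<in>Q - S. insert b (S - {\<pi> b}) \<in> F"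
    using exchange_bijection[OF matroid S Q(1,2) rank] by blast
  have SU: "S \<subseteq> U" and QU: "Q \<subseteq> U" using matroid_indep_finite[OF matroid] S Q by auto
  note loc = local_optimum_inequality[OF no_swap S Q(1) bij swaps]
  show ?thesis
  proof (cases "card (Q - S) = 2")
    case True
    show ?thesis using exchange_ratio_two[OF SU QU bij True not_pair loc] True by simp
  next
    case False
    show ?thesis by (rule exchange_ratio_generic[OF SU QU bij False loc])
  qed
qed

lemma pair_le_best_pair:
  assumes best: "\<forall>a b. a \<noteq> b \<and> {a, b} \<in> F \<longrightarrow> f {a, b} + lam * d a b \<le> f {x, y} + lam * d x y"
    and xy: "x \<noteq> y" "{x, y} \<in> F" and Q: "Q \<in> F" "card Q = 2"
  shows "phi f lam d Q \<le> phi f lam d {x, y}"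
proof -
  obtain a b where ab: "Q = {a, b}" "a \<noteq> b" using Q(2) by (auto simp: card_2_iff)
  have "{a, b} \<subseteq> U" "{x, y} \<subseteq> U" using matroid_indep_finite[OF matroid] Q(1) xy(2) ab by auto
  then show ?thesis using best ab xy Q(1) phi_pair by auto
qed

end

theorem theorem2:
  fixes U :: "'a set" and F :: "'a set set" and f :: "'a set \<Rightarrow> real"
    and d :: "'a \<Rightarrow> 'a \<Rightarrow> real" and \<alpha> lam :: real
    and x y :: 'a and S0 S Opt :: "'a set"
  assumes "matroid U F"
    and "matroid_rank_ge2 F"
    and "lam \<ge> 0"
    and "relaxed_semimetric \<alpha> U d"
    and "\<forall>T \<subseteq> U. f T \<ge> 0"
    and "monotone_set_fun U f"
    and "submodular U f"
    and "x \<noteq> y" and "{x, y} \<in> F"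
    and "\<forall>a b. a \<noteq> b \<and> {a, b} \<in> F \<longrightarrow>
           f {a, b} + lam * d a b \<le> f {x, y} + lam * d x y"
    and "basis U F S0" and "x \<in> S0" and "y \<in> S0"
    and "(improving_swap U F (phi f lam d))\<^sup>*\<^sup>* S0 S"
    and "\<not> (\<exists>S'. improving_swap U F (phi f lam d) S S')"
    and "Opt \<in> F" and "\<forall>T \<in> F. phi f lam d T \<le> phi f lam d Opt"
  shows "phi f lam d S \<ge> phi f lam d Opt / (2 * \<alpha>^2)"
proof -
  \<comment> \<open>the rank hypothesis \<open>matroid_rank_ge2 F\<close> is implied by \<open>{x, y} \<in> F\<close> and not needed\<close>
  interpret diversity_instance \<alpha> U d F f lam
    by unfold_locales (fact assms)+
  have S0: "S0 \<in> F" and S0U: "S0 \<subseteq> U"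
    using assms(11) matroid_indep_finite[OF matroid] unfolding basis_def by auto
  have S: "S \<in> F" "card S = card S0" "phi f lam d S0 \<le> phi f lam d S"
    using improving_swaps_invariant[OF matroid assms(14) S0] by auto
  then have SU: "S \<subseteq> U" using matroid_indep_finite[OF matroid] by blast
  have rank: "\<forall>I\<in>F. card I \<le> card S" using basis_card_max[OF matroid assms(11)] S(2) by simp
  obtain Q where Q: "Q \<in> F" "Opt \<subseteq> Q" "card Q = card S"
    using matroid_extend_to_card[OF matroid assms(16) S(1)] rank assms(16) by blast
  have "phi f lam d Q \<le> 2 * \<alpha>\<^sup>2 * phi f lam d S"
  proof (cases "card (Q - S) = 2 \<and> S \<inter> Q = {}")
    case True
    then have "Q - S = Q" by blast
    then have "card Q = 2" using True by simp
    then have "phi f lam d Q \<le> phi f lam d {x, y}"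
      using pair_le_best_pair[OF assms(10,8,9) Q(1)] by blast
    also have "\<dots> \<le> phi f lam d S0" using assms(12,13) S0U by (intro phi_mono) auto
    also have "\<dots> \<le> 2 * \<alpha>\<^sup>2 * phi f lam d S"
      using S(3) le_two_alpha_sq_mult[OF phi_nonneg[OF SU]] by linarith
    finally show ?thesis .
  next
    case False
    then show ?thesis using local_optimum_ratio[OF assms(15) S(1) rank Q(1,3)] by blast
  qed
  moreover have "phi f lam d Opt \<le> phi f lam d Q"
    using Q matroid_indep_finite[OF matroid] by (intro phi_mono) auto
  ultimately show ?thesis using alpha_ge_1 by (simp add: divide_le_eq mult.commute)
qed

end
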